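(* Let $\mathcal U=\{U_1|\dots|U_b\}$ be a partition of a $v$-set $\mathcal V$ into $b$ parts of size $a$, $v=ab$, $a>1$, $b\ge4$, let $k=ak_0$ with $1\le k_0\le b-1$, let $\Gamma_0\subseteq\binom{\mathcal U}{k_0}$, and let $\Gamma=\Gamma(a,\Gamma_0)$ be the set of all $k$-subsets of $\mathcal V$ of the form $\bigcup_{U\in\gamma_0}U$ with $\gamma_0\in\Gamma_0$. Let $A={\rm Aut}(\Gamma_0)\cap{\rm Sym}(\mathcal U)$. Then ${\rm Aut}(\Gamma)$ contains $S_a\wr A$, and $\delta(\Gamma)=a\,\delta(\Gamma_0)$. Moreover: (a) if $\Gamma_0$ is $A$-strongly incidence-transitive, then $\Gamma$ is $(S_a\wr A)$-strongly incidence-transitive, and either $\Gamma_0=\binom{\mathcal U}{k_0}$ or $\delta(\Gamma_0)\ge2$; (b) conversely, if $S_a\wr A$ is neighbour-transitive on $\Gamma$ (i.e. transitive on $\Gamma$ and on its neighbour set), then either $\Gamma_0$ is $A$-strongly incidence-transitive, or $a=2$ and $\delta(\Gamma_0)=1$.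
   Context: $\Gamma_0$ is regarded as a set of vertices of the Johnson graph $J(b,k_0)$ on the $b$-set $\mathcal U$, and $\Gamma$ as a set of vertices of $J(v,k)$ on $\mathcal V$; $J(n,j)$ has as vertices the $j$-subsets of an $n$-set, adjacent iff they meet in $j-1$ points. For such a set $\Delta$ of vertices: $\delta(\Delta)$ is the least graph distance between distinct elements; the neighbour set is the set of vertices not in $\Delta$ adjacent to some element of $\Delta$; ${\rm Aut}(\Delta)$ is the setwise stabiliser of $\Delta$ in the automorphism group of the Johnson graph. $S_a\wr A$ denotes the subgroup of ${\rm Sym}(\mathcal V)$ preserving $\mathcal U$, inducing a permutation in $A$ on the parts and arbitrary permutations within parts. $\Delta$ is $H$-strongly incidence-transitive (for $H$ a group of permutations of the underlying set leaving $\Delta$ invariant) if $H$ is transitive on $\Delta$ and, for $\delta\in\Delta$, $H_\delta$ is transitive on $\delta\times(\text{underlying set}\setminus\delta)$. *)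

theory Defs
  imports Main "HOL-Library.Extended_Nat" "HOL-Library.Disjoint_Sets"
    "HOL-Combinatorics.Permutations"
begin

definition johnson_verts :: "'b set \<Rightarrow> nat \<Rightarrow> 'b set set" where
  "johnson_verts X j = {S. S \<subseteq> X \<and> card S = j}"

definition johnson_adj :: "'b set \<Rightarrow> nat \<Rightarrow> 'b set \<Rightarrow> 'b set \<Rightarrow> bool" where
  "johnson_adj X j A B \<longleftrightarrow> A \<in> johnson_verts X j \<and> B \<in> johnson_verts X j \<and> A \<noteq> B
      \<and> card (A \<inter> B) = j - 1"

inductive walk :: "('c \<Rightarrow> 'c \<Rightarrow> bool) \<Rightarrow> nat \<Rightarrow> 'c \<Rightarrow> 'c \<Rightarrow> bool" for adj where
  walk_nil: "walk adj 0 x x"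
| walk_step: "adj x y \<Longrightarrow> walk adj n y z \<Longrightarrow> walk adj (Suc n) x z"

definition graph_dist :: "('c \<Rightarrow> 'c \<Rightarrow> bool) \<Rightarrow> 'c \<Rightarrow> 'c \<Rightarrow> enat" where
  "graph_dist adj x y = Inf {enat n | n. walk adj n x y}"

(* minimum distance delta(Delta) of a code Delta in J(|X|, j);
   by convention infinity if Delta has fewer than two elements *)
definition min_dist :: "'b set \<Rightarrow> nat \<Rightarrow> 'b set set \<Rightarrow> enat" where
  "min_dist X j \<Delta> = Inf {graph_dist (johnson_adj X j) x y | x y. x \<in> \<Delta> \<and> y \<in> \<Delta> \<and> x \<noteq> y}"

definition nbr_set :: "'b set \<Rightarrow> nat \<Rightarrow> 'b set set \<Rightarrow> 'b set set" where
  "nbr_set X j \<Delta> = {w \<in> johnson_verts X j. w \<notin> \<Delta> \<and> (\<exists>d\<in>\<Delta>. johnson_adj X j d w)}"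

definition johnson_aut :: "'b set \<Rightarrow> nat \<Rightarrow> 'b set set \<Rightarrow> ('b set \<Rightarrow> 'b set) set" where
  "johnson_aut X j \<Delta> = {\<phi>. bij_betw \<phi> (johnson_verts X j) (johnson_verts X j)
      \<and> (\<forall>A\<in>johnson_verts X j. \<forall>B\<in>johnson_verts X j.
            johnson_adj X j (\<phi> A) (\<phi> B) \<longleftrightarrow> johnson_adj X j A B)
      \<and> \<phi> ` \<Delta> = \<Delta>}"

definition set_transitive :: "('b \<Rightarrow> 'b) set \<Rightarrow> 'b set set \<Rightarrow> bool" where
  "set_transitive H \<Delta> \<longleftrightarrow> (\<forall>x\<in>\<Delta>. \<forall>y\<in>\<Delta>. \<exists>h\<in>H. h ` x = y)"

definition strongly_incidence_transitive :: "('b \<Rightarrow> 'b) set \<Rightarrow> 'b set \<Rightarrow> 'b set set \<Rightarrow> bool" where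
  "strongly_incidence_transitive H X \<Delta> \<longleftrightarrow>
     (\<forall>h\<in>H. (\<lambda>S. h ` S) ` \<Delta> = \<Delta>) \<and> set_transitive H \<Delta> \<and>
     (\<forall>d\<in>\<Delta>. \<forall>x\<in>d. \<forall>y\<in>X - d. \<forall>x'\<in>d. \<forall>y'\<in>X - d.
         \<exists>h\<in>H. h ` d = d \<and> h x = x' \<and> h y = y')"

definition neighbour_transitive :: "('b \<Rightarrow> 'b) set \<Rightarrow> 'b set \<Rightarrow> nat \<Rightarrow> 'b set set \<Rightarrow> bool" where
  "neighbour_transitive H X j \<Delta> \<longleftrightarrow> set_transitive H \<Delta> \<and> set_transitive H (nbr_set X j \<Delta>)"

definition aut_sym :: "'b set \<Rightarrow> nat \<Rightarrow> 'b set set \<Rightarrow> ('b \<Rightarrow> 'b) set" where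
  "aut_sym U k0 \<Gamma>0 = {\<sigma>. \<sigma> permutes U \<and> (\<lambda>S. \<sigma> ` S) \<in> johnson_aut U k0 \<Gamma>0}"

(* S_a wr A: permutations of V preserving the partition U and inducing an element of A on U *)
definition wreath :: "'a set \<Rightarrow> 'a set set \<Rightarrow> ('a set \<Rightarrow> 'a set) set \<Rightarrow> ('a \<Rightarrow> 'a) set" where
  "wreath V U A = {g. g permutes V \<and> (\<forall>u\<in>U. g ` u \<in> U)
      \<and> (\<lambda>u. if u \<in> U then g ` u else u) \<in> A}"

definition blowup :: "'a set set set \<Rightarrow> 'a set set" where
  "blowup \<Gamma>0 = (\<lambda>\<gamma>. \<Union>\<gamma>) ` \<Gamma>0"

end

theory Submission
  imports Defs
begin

(* The blocks of U are disjoint of size a, so gamma0 |-> Union gamma0 is injective and turns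
   a difference of k0-subsets of U into a difference of a times as many points; since the Johnson
   distance of two vertices A, B is |A - B|, all distances in Gamma are a times those in Gamma0.
   An element of S_a wr A permutes the blocks by an element of A, hence preserves Gamma, and
   because points can be moved freely inside blocks, strong incidence-transitivity of Gamma0
   lifts to Gamma.  If moreover two codewords of Gamma0 are adjacent, strong
   incidence-transitivity makes Gamma0 closed under every swap of a point for a non-point,
   so Gamma0 is everything by connectivity of the Johnson graph.
   Conversely, the neighbours of Union gamma0 outside Gamma are obtained by swapping a point p
   of a block x in gamma0 for a point q of a block y outside gamma0; such a neighbour meets x in
   a - 1 points, y in 1 point, the other blocks of gamma0 in a points and all remaining blocks
   in none.  These numbers are preserved by S_a wr A, so an element mapping one such neighbour
   to another induces a permutation of U stabilising gamma0 with x |-> x', y |-> y'; the only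
   exception is a - 1 = 1, where x and y may be interchanged, and then Gamma0 contains two
   adjacent codewords. *)

section \<open>Distances in the Johnson graph\<close>

lemma card_Diff_commute:
  assumes "finite A" "finite B" "card A = card B"
  shows "card (A - B) = card (B - A)"
  using assms by (simp add: card_Diff_subset_Int Int_commute)

lemma card_insert_Diff_singleton:
  assumes "finite A" "p \<in> A" "q \<notin> A"
  shows "card (insert q (A - {p})) = card A"
  using assms card_Suc_Diff1[OF assms(1,2)] by simp

lemma johnson_vertsD:
  assumes "finite X" "A \<in> johnson_verts X j"
  shows "A \<subseteq> X" "finite A" "card A = j"
  using assms finite_subset unfolding johnson_verts_def by blast+

lemma johnson_verts_Diff_eq_empty_iff:
  assumes "finite X" "A \<in> johnson_verts X j" "B \<in> johnson_verts X j"
  shows "A - B = {} \<longleftrightarrow> A = B"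
  using card_subset_eq[of B A] johnson_vertsD[OF assms(1,2)] johnson_vertsD[OF assms(1,3)] by auto

lemma johnson_adj_iff_card_Diff:
  assumes "finite X"
  shows "johnson_adj X j A B \<longleftrightarrow>
    A \<in> johnson_verts X j \<and> B \<in> johnson_verts X j \<and> card (A - B) = 1"
proof (cases "A \<in> johnson_verts X j \<and> B \<in> johnson_verts X j")
  case True
  then have fin: "finite A" "finite B" and card: "card A = j" "card B = j"
    using johnson_vertsD[OF assms] by blast+
  have diff: "card (A - B) = j - card (A \<inter> B)"
    using fin card by (simp add: card_Diff_subset_Int)
  have "A \<noteq> B \<longleftrightarrow> A - B \<noteq> {}"
    using johnson_verts_Diff_eq_empty_iff[OF assms, of A j B] True by blast
  also have "\<dots> \<longleftrightarrow> 0 < card (A - B)"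
    using fin by (simp add: card_gt_0_iff)
  finally have "A \<noteq> B \<longleftrightarrow> card (A \<inter> B) < j"
    using diff by linarith
  then have "A \<noteq> B \<and> card (A \<inter> B) = j - 1 \<longleftrightarrow> card (A - B) = 1"
    using diff by linarith
  then show ?thesis
    using True by (simp add: johnson_adj_def)
qed (auto simp: johnson_adj_def)

lemma johnson_adj_swap:
  assumes "finite X" "A \<in> johnson_verts X j" "p \<in> A" "q \<in> X - A"
  shows "johnson_adj X j A (insert q (A - {p}))"
proof -
  have "insert q (A - {p}) \<in> johnson_verts X j"
    using johnson_vertsD[OF assms(1,2)] assms(3,4) card_insert_Diff_singleton[of A p q]
    by (auto simp: johnson_verts_def)
  moreover have "A - insert q (A - {p}) = {p}" using assms(3,4) by auto
  ultimately show ?thesis using assms by (simp add: johnson_adj_iff_card_Diff)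
qed

lemma johnson_adjE:
  assumes "finite X" "johnson_adj X j A B"
  obtains p q where "p \<in> A" "q \<in> X - A" "B = insert q (A - {p})"
proof -
  have A: "A \<in> johnson_verts X j" and B: "B \<in> johnson_verts X j" and "card (A - B) = 1"
    using assms by (simp_all add: johnson_adj_iff_card_Diff)
  moreover have "card (B - A) = card (A - B)"
    using johnson_vertsD[OF assms(1) A] johnson_vertsD[OF assms(1) B]
    by (intro card_Diff_commute) simp_all
  ultimately obtain p q where "A - B = {p}" "B - A = {q}"
    using card_1_singletonE by metis
  moreover have "B \<subseteq> X" using johnson_vertsD[OF assms(1) B] by simp
  ultimately show ?thesis by (intro that[of p q]) blast+
qed

lemma johnson_swap_induct [consumes 3, case_names base swap]:
  assumes "finite X" "B \<in> johnson_verts X j" "A \<in> johnson_verts X j"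
    and base: "P B"
    and swap: "\<And>C p q. C \<in> johnson_verts X j \<Longrightarrow> p \<in> C - B \<Longrightarrow> q \<in> B - C \<Longrightarrow>
        P (insert q (C - {p})) \<Longrightarrow> P C"
  shows "P A"
  using assms(3)
proof (induction "card (A - B)" arbitrary: A)
  case 0
  have "A = B"
    using 0 johnson_verts_Diff_eq_empty_iff[OF assms(1) 0(2) assms(2)]
      johnson_vertsD(2)[OF assms(1) 0(2)]
    by simp
  then show ?case using base by simp
next
  case (Suc m)
  note A = johnson_vertsD[OF assms(1) Suc.prems] and B = johnson_vertsD[OF assms(1,2)]
  obtain p where p: "p \<in> A - B"
    using Suc.hyps(2) by (cases "A - B = {}") auto
  have "card (B - A) = Suc m"
    using card_Diff_commute[of A B] A B Suc.hyps(2) by simp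
  then obtain q where q: "q \<in> B - A"
    by (cases "B - A = {}") auto
  have "insert q (A - {p}) \<in> johnson_verts X j"
    using A B p q card_insert_Diff_singleton[of A p q] by (auto simp: johnson_verts_def)
  moreover have "insert q (A - {p}) - B = (A - B) - {p}" using q by auto
  then have "card (insert q (A - {p}) - B) = m" using Suc.hyps(2) p A(2) by simp
  ultimately show ?case using Suc.hyps(1) swap[OF Suc.prems p q] by simp
qed

lemma walk_johnson_card_Diff:
  assumes "finite X" "A \<in> johnson_verts X j" "B \<in> johnson_verts X j"
  shows "walk (johnson_adj X j) (card (A - B)) A B"
  using assms(1,3,2)
proof (induction rule: johnson_swap_induct)
  case base
  show ?case by (simp add: walk_nil)
next
  case (swap C p q)
  note C = johnson_vertsD[OF assms(1) swap.hyps(1)]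
  have "johnson_adj X j C (insert q (C - {p}))"
    using swap.hyps johnson_vertsD(1)[OF assms(1,3)]
    by (intro johnson_adj_swap[OF assms(1)]) auto
  moreover have "insert q (C - {p}) - B = (C - B) - {p}" using swap.hyps by auto
  then have "card (C - B) = Suc (card (insert q (C - {p}) - B))"
    using swap.hyps C(2) card_Suc_Diff1[of "C - B" p] by simp
  ultimately show ?case using swap.IH by (simp add: walk_step)
qed

lemma walk_johnson_card_Diff_le:
  assumes "walk (johnson_adj X j) n A B" "finite X"
  shows "card (A - B) \<le> n"
  using assms
proof (induction rule: walk.induct)
  case (walk_nil A)
  show ?case by simp
next
  case (walk_step A C n B)
  have A: "A \<in> johnson_verts X j" and C: "C \<in> johnson_verts X j" and "card (A - C) = 1"
    using walk_step.hyps(1) walk_step.prems by (simp_all add: johnson_adj_iff_card_Diff)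
  have "card (A - B) \<le> card ((A - C) \<union> (C - B))"
    using johnson_vertsD(2)[OF walk_step.prems A] johnson_vertsD(2)[OF walk_step.prems C]
    by (intro card_mono) auto
  also have "\<dots> \<le> card (A - C) + card (C - B)" by (rule card_Un_le)
  finally show ?case using \<open>card (A - C) = 1\<close> walk_step.IH walk_step.prems by simp
qed

lemma graph_dist_johnson:
  assumes "finite X" "A \<in> johnson_verts X j" "B \<in> johnson_verts X j"
  shows "graph_dist (johnson_adj X j) A B = enat (card (A - B))"
  unfolding graph_dist_def
proof (rule antisym)
  show "Inf {enat n |n. walk (johnson_adj X j) n A B} \<le> enat (card (A - B))"
    using walk_johnson_card_Diff[OF assms] by (auto intro: Inf_lower)
  show "enat (card (A - B)) \<le> Inf {enat n |n. walk (johnson_adj X j) n A B}"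
    using walk_johnson_card_Diff_le assms(1) by (auto intro!: Inf_greatest)
qed

lemma min_dist_johnson:
  assumes "finite X" "\<Delta> \<subseteq> johnson_verts X j"
  shows "min_dist X j \<Delta> = (INF (A, B) \<in> {(A, B) \<in> \<Delta> \<times> \<Delta>. A \<noteq> B}. enat (card (A - B)))"
proof -
  let ?P = "{(A, B) \<in> \<Delta> \<times> \<Delta>. A \<noteq> B}"
  have "{graph_dist (johnson_adj X j) A B | A B. A \<in> \<Delta> \<and> B \<in> \<Delta> \<and> A \<noteq> B} =
      (\<lambda>(A, B). graph_dist (johnson_adj X j) A B) ` ?P"
    by auto
  also have "\<dots> = (\<lambda>(A, B). enat (card (A - B))) ` ?P"
    using graph_dist_johnson[OF assms(1)] assms(2) by (intro image_cong) auto
  finally show ?thesis unfolding min_dist_def by simp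
qed

lemma INF_mult_left_enat:
  fixes f :: "'a \<Rightarrow> enat"
  assumes "0 < c"
  shows "(INF x\<in>S. enat c * f x) = enat c * (INF x\<in>S. f x)"
proof (cases "S = {}")
  case True
  then show ?thesis using assms by (simp add: top_enat_def)
next
  case False
  then obtain x0 where x0: "x0 \<in> S" "f x0 = (INF x\<in>S. f x)"
    using wellorder_InfI[of _ "f ` S"] by fastforce
  show ?thesis
  proof (rule antisym)
    show "(INF x\<in>S. enat c * f x) \<le> enat c * (INF x\<in>S. f x)"
      using INF_lower[OF x0(1), of "\<lambda>x. enat c * f x"] x0(2) by simp
    show "enat c * (INF x\<in>S. f x) \<le> (INF x\<in>S. enat c * f x)"
      by (rule INF_greatest) (simp add: mult_left_mono INF_lower)
  qed
qed

lemma one_le_min_dist: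
  assumes "finite X" "\<Delta> \<subseteq> johnson_verts X j"
  shows "1 \<le> min_dist X j \<Delta>"
  unfolding min_dist_johnson[OF assms]
proof (rule INF_greatest, clarify)
  fix A B assume "A \<in> \<Delta>" "B \<in> \<Delta>" "A \<noteq> B"
  moreover have "A \<in> johnson_verts X j" "B \<in> johnson_verts X j"
    using \<open>A \<in> \<Delta>\<close> \<open>B \<in> \<Delta>\<close> assms(2) by auto
  ultimately have "A - B \<noteq> {}" "finite A"
    using johnson_verts_Diff_eq_empty_iff[OF assms(1)] johnson_vertsD(2)[OF assms(1)] by simp_all
  then show "1 \<le> enat (card (A - B))"
    by (simp add: one_enat_def Suc_le_eq card_gt_0_iff)
qed

lemma min_dist_eq_1_iff:
  assumes "finite X" "\<Delta> \<subseteq> johnson_verts X j"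
  shows "min_dist X j \<Delta> = 1 \<longleftrightarrow> (\<exists>A\<in>\<Delta>. \<exists>B\<in>\<Delta>. johnson_adj X j A B)"
proof
  let ?P = "{(A, B) \<in> \<Delta> \<times> \<Delta>. A \<noteq> B}" and ?d = "\<lambda>(A, B). enat (card (A - B))"
  assume "min_dist X j \<Delta> = 1"
  then have d1: "Inf (?d ` ?P) = 1" using min_dist_johnson[OF assms] by simp
  have "?P \<noteq> {}"
  proof
    assume "?P = {}"
    then have "Inf (?d ` ?P) = \<infinity>" by (simp only: image_empty Inf_empty top_enat_def)
    with d1 show False by simp
  qed
  then obtain z where "z \<in> ?P" by blast
  then have "Inf (?d ` ?P) \<in> ?d ` ?P" by (intro wellorder_InfI[of "?d z"]) (rule imageI)
  then have "1 \<in> ?d ` ?P" using d1 by simp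
  then obtain p where "1 = ?d p" "p \<in> ?P" by (rule imageE)
  moreover obtain A B where "p = (A, B)" by (cases p)
  ultimately have AB: "A \<in> \<Delta>" "B \<in> \<Delta>" "enat (card (A - B)) = 1" by simp_all
  moreover have "A \<in> johnson_verts X j" "B \<in> johnson_verts X j" using AB(1,2) assms(2) by auto
  ultimately have "johnson_adj X j A B"
    using assms(1) by (simp add: johnson_adj_iff_card_Diff one_enat_def)
  with AB show "\<exists>A\<in>\<Delta>. \<exists>B\<in>\<Delta>. johnson_adj X j A B" by blast
next
  assume "\<exists>A\<in>\<Delta>. \<exists>B\<in>\<Delta>. johnson_adj X j A B"
  then obtain A B where AB: "A \<in> \<Delta>" "B \<in> \<Delta>" "johnson_adj X j A B" by blast
  then have "A \<noteq> B" "card (A - B) = 1"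
    using johnson_adj_iff_card_Diff[OF assms(1)] by (auto simp: johnson_adj_def)
  then have "min_dist X j \<Delta> \<le> 1"
    unfolding min_dist_johnson[OF assms] using AB(1,2)
    by (intro INF_lower2[of "(A, B)"]) (simp_all add: one_enat_def)
  then show "min_dist X j \<Delta> = 1" using one_le_min_dist[OF assms] by simp
qed

lemma swap_closed_eq_johnson_verts:
  assumes "finite X" "\<Delta> \<subseteq> johnson_verts X j" "B \<in> \<Delta>"
    and swap: "\<And>A p q. A \<in> \<Delta> \<Longrightarrow> p \<in> A \<Longrightarrow> q \<in> X - A \<Longrightarrow> insert q (A - {p}) \<in> \<Delta>"
  shows "\<Delta> = johnson_verts X j"
proof (rule subset_antisym[OF assms(2)], rule subsetI)
  fix A assume A: "A \<in> johnson_verts X j"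
  have B: "B \<in> johnson_verts X j" using assms(2,3) by blast
  from assms(1) B A show "A \<in> \<Delta>"
  proof (induction rule: johnson_swap_induct)
    case base
    show ?case using assms(3) .
  next
    case (swap C p q)
    have "insert p (insert q (C - {p}) - {q}) \<in> \<Delta>"
      using swap.hyps johnson_vertsD(1)[OF assms(1) swap.hyps(1)]
      by (intro assms(4)[OF swap.IH]) auto
    moreover have "insert p (insert q (C - {p}) - {q}) = C" using swap.hyps(2,3) by auto
    ultimately show ?case by simp
  qed
qed

section \<open>Permutations and strong incidence-transitivity\<close>

lemma permutes_johnson_verts_image:
  assumes "g permutes X" "A \<in> johnson_verts X j"
  shows "g ` A \<in> johnson_verts X j"
  using assms permutes_image[OF assms(1)] permutes_inj[OF assms(1)]
  by (auto simp: johnson_verts_def card_image inj_on_subset)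

lemma permutes_johnson_aut_iff:
  assumes "g permutes X"
  shows "(\<lambda>S. g ` S) \<in> johnson_aut X j \<Delta> \<longleftrightarrow> (\<lambda>S. g ` S) ` \<Delta> = \<Delta>"
proof -
  have inj: "inj g" using permutes_inj[OF assms] .
  have "bij_betw (\<lambda>S. g ` S) (johnson_verts X j) (johnson_verts X j)"
  proof (rule bij_betw_byWitness[where f' = "\<lambda>S. inv g ` S"])
    show "\<forall>S\<in>johnson_verts X j. inv g ` g ` S = S" "\<forall>S\<in>johnson_verts X j. g ` inv g ` S = S"
      using permutes_inverses[OF assms] by (simp_all add: image_image)
    show "(\<lambda>S. g ` S) ` johnson_verts X j \<subseteq> johnson_verts X j"
      using permutes_johnson_verts_image[OF assms] by auto
    show "(\<lambda>S. inv g ` S) ` johnson_verts X j \<subseteq> johnson_verts X j"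
      using permutes_johnson_verts_image[OF permutes_inv[OF assms]] by auto
  qed
  moreover have "johnson_adj X j (g ` A) (g ` B) \<longleftrightarrow> johnson_adj X j A B"
    if "A \<in> johnson_verts X j" "B \<in> johnson_verts X j" for A B
  proof -
    have "card (g ` A \<inter> g ` B) = card (A \<inter> B)"
      using inj by (simp add: image_Int[symmetric] card_image inj_on_subset)
    then show ?thesis
      using that permutes_johnson_verts_image[OF assms] inj
      by (simp add: johnson_adj_def inj_image_eq_iff)
  qed
  ultimately show ?thesis unfolding johnson_aut_def by auto
qed

lemma aut_sym_eq: "aut_sym X j \<Delta> = {\<sigma>. \<sigma> permutes X \<and> (\<lambda>S. \<sigma> ` S) ` \<Delta> = \<Delta>}"
  unfolding aut_sym_def
proof (rule Collect_cong)
  fix \<sigma>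
  show "\<sigma> permutes X \<and> (\<lambda>S. \<sigma> ` S) \<in> johnson_aut X j \<Delta> \<longleftrightarrow>
      \<sigma> permutes X \<and> (\<lambda>S. \<sigma> ` S) ` \<Delta> = \<Delta>"
    using permutes_johnson_aut_iff[of \<sigma> X j \<Delta>] by blast
qed

lemma set_transitiveD:
  "set_transitive H \<Delta> \<Longrightarrow> D \<in> \<Delta> \<Longrightarrow> D' \<in> \<Delta> \<Longrightarrow> \<exists>h\<in>H. h ` D = D'"
  unfolding set_transitive_def by simp

lemma strongly_incidence_transitiveD:
  assumes "strongly_incidence_transitive H X \<Delta>"
  shows strongly_incidence_transitive_image: "h \<in> H \<Longrightarrow> D \<in> \<Delta> \<Longrightarrow> h ` D \<in> \<Delta>"
    and strongly_incidence_transitive_set_transitive: "set_transitive H \<Delta>"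
    and strongly_incidence_transitive_stabiliser: "D \<in> \<Delta> \<Longrightarrow> x \<in> D \<Longrightarrow> y \<in> X - D \<Longrightarrow>
      x' \<in> D \<Longrightarrow> y' \<in> X - D \<Longrightarrow> \<exists>h\<in>H. h ` D = D \<and> h x = x' \<and> h y = y'"
proof -
  assume "h \<in> H" "D \<in> \<Delta>"
  have "h ` D \<in> (\<lambda>S. h ` S) ` \<Delta>" using \<open>D \<in> \<Delta>\<close> by (rule imageI)
  moreover have "(\<lambda>S. h ` S) ` \<Delta> = \<Delta>"
    using assms \<open>h \<in> H\<close> unfolding strongly_incidence_transitive_def by simp
  ultimately show "h ` D \<in> \<Delta>" by simp
next
  show "set_transitive H \<Delta>"
    using assms unfolding strongly_incidence_transitive_def by simp
next
  show "D \<in> \<Delta> \<Longrightarrow> x \<in> D \<Longrightarrow> y \<in> X - D \<Longrightarrow> x' \<in> D \<Longrightarrow> y' \<in> X - D \<Longrightarrow>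
      \<exists>h\<in>H. h ` D = D \<and> h x = x' \<and> h y = y'"
    using assms unfolding strongly_incidence_transitive_def by simp
qed

lemma strongly_incidence_transitive_swap_closed:
  assumes perm: "\<forall>h\<in>H. h permutes X" and sit: "strongly_incidence_transitive H X \<Delta>"
    and B: "B \<in> \<Delta>" "p \<in> B" "q \<in> X - B" "insert q (B - {p}) \<in> \<Delta>"
    and A: "A \<in> \<Delta>" "p' \<in> A" "q' \<in> X - A"
  shows "insert q' (A - {p'}) \<in> \<Delta>"
proof -
  obtain h where h: "h \<in> H" "h ` B = A"
    using set_transitiveD[OF strongly_incidence_transitive_set_transitive[OF sit] B(1) A(1)]
    by blast
  have "h permutes X" using perm h(1) by simp
  then have "inj h" "h ` X = X" by (simp_all add: permutes_inj permutes_image)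
  then have "h p \<in> A" "h q \<in> X - A"
    using h(2) B(2,3) inj_image_mem_iff[OF \<open>inj h\<close>] by blast+
  then obtain h' where h': "h' \<in> H" "h' ` A = A" "h' (h p) = p'" "h' (h q) = q'"
    using strongly_incidence_transitive_stabiliser[OF sit A(1) _ _ A(2,3)] by blast
  have "h' permutes X" using perm h'(1) by simp
  then have "inj h'" by (rule permutes_inj)
  then have "h' ` h ` insert q (B - {p}) = insert q' (A - {p'})"
    using \<open>inj h\<close> h(2) h'(2-4) by (simp add: image_set_diff)
  moreover have "h ` insert q (B - {p}) \<in> \<Delta>"
    by (rule strongly_incidence_transitive_image[OF sit h(1) B(4)])
  then have "h' ` h ` insert q (B - {p}) \<in> \<Delta>"
    by (rule strongly_incidence_transitive_image[OF sit h'(1)])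
  ultimately show ?thesis by simp
qed

lemma strongly_incidence_transitive_min_dist:
  assumes "finite X" "\<Delta> \<subseteq> johnson_verts X j" "\<forall>h\<in>H. h permutes X"
    and sit: "strongly_incidence_transitive H X \<Delta>"
  shows "\<Delta> = johnson_verts X j \<or> 2 \<le> min_dist X j \<Delta>"
proof (cases "min_dist X j \<Delta> = 1")
  case True
  then obtain B C where "B \<in> \<Delta>" "C \<in> \<Delta>" "johnson_adj X j B C"
    using min_dist_eq_1_iff[OF assms(1,2)] by blast
  moreover from assms(1) \<open>johnson_adj X j B C\<close>
  obtain p q where "p \<in> B" "q \<in> X - B" "C = insert q (B - {p})"
    by (rule johnson_adjE)
  ultimately have "\<Delta> = johnson_verts X j"
    using strongly_incidence_transitive_swap_closed[OF assms(3) sit]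
    by (intro swap_closed_eq_johnson_verts[OF assms(1,2) \<open>B \<in> \<Delta>\<close>]) blast
  then show ?thesis ..
next
  case False
  then have "1 < min_dist X j \<Delta>"
    using one_le_min_dist[OF assms(1,2)] by (simp add: order_less_le)
  then have "eSuc 1 \<le> min_dist X j \<Delta>" by (rule ileI1)
  moreover have "eSuc 1 = 2" by (simp add: one_enat_def eSuc_enat numeral_eq_enat)
  ultimately show ?thesis by simp
qed

section \<open>Wreath products acting on a uniform partition\<close>

lemma mem_wreath_iff:
  assumes "\<forall>\<sigma>\<in>A. \<sigma> permutes U"
  shows "g \<in> wreath V U A \<longleftrightarrow> g permutes V \<and> (\<exists>\<sigma>\<in>A. \<forall>u\<in>U. g ` u = \<sigma> u)"
proof
  assume "g \<in> wreath V U A"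
  then have "g permutes V" "(\<lambda>u. if u \<in> U then g ` u else u) \<in> A"
    unfolding wreath_def by simp_all
  then show "g permutes V \<and> (\<exists>\<sigma>\<in>A. \<forall>u\<in>U. g ` u = \<sigma> u)"
    by (intro conjI bexI[of _ "\<lambda>u. if u \<in> U then g ` u else u"]) simp_all
next
  assume "g permutes V \<and> (\<exists>\<sigma>\<in>A. \<forall>u\<in>U. g ` u = \<sigma> u)"
  then obtain \<sigma> where g: "g permutes V" and \<sigma>: "\<sigma> \<in> A" "\<forall>u\<in>U. g ` u = \<sigma> u" by blast
  have "\<sigma> permutes U" using assms \<sigma>(1) by simp
  then have "(\<lambda>u. if u \<in> U then g ` u else u) = \<sigma>" "\<forall>u\<in>U. g ` u \<in> U"
    using \<sigma>(2) by (simp_all add: fun_eq_iff permutes_not_in permutes_in_image)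
  then show "g \<in> wreath V U A" unfolding wreath_def using g \<sigma>(1) by simp
qed

lemma image_Union_blocks:
  assumes "\<forall>u\<in>U. g ` u = \<sigma> u" "\<gamma> \<subseteq> U"
  shows "g ` \<Union>\<gamma> = \<Union>(\<sigma> ` \<gamma>)"
proof -
  have "(\<lambda>u. g ` u) ` \<gamma> = \<sigma> ` \<gamma>" using assms by (intro image_cong) auto
  then show ?thesis by (simp add: image_Union)
qed

lemma wreath_image_blowup:
  assumes "\<forall>\<sigma>\<in>A. \<sigma> permutes U \<and> (\<lambda>S. \<sigma> ` S) ` \<Gamma>0 = \<Gamma>0" "\<forall>\<gamma>\<in>\<Gamma>0. \<gamma> \<subseteq> U"
    and "g \<in> wreath V U A"
  shows "(\<lambda>S. g ` S) ` blowup \<Gamma>0 = blowup \<Gamma>0"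
proof -
  obtain \<sigma> where \<sigma>: "\<sigma> \<in> A" "\<forall>u\<in>U. g ` u = \<sigma> u"
    using assms(3) mem_wreath_iff[of A U g V] assms(1) by auto
  have "(\<lambda>S. g ` S) ` blowup \<Gamma>0 = (\<lambda>\<gamma>. \<Union>(\<sigma> ` \<gamma>)) ` \<Gamma>0"
    unfolding blowup_def image_image using \<sigma>(2) assms(2)
    by (intro image_cong) (simp_all add: image_Union_blocks)
  also have "\<dots> = (\<lambda>\<gamma>. \<Union>\<gamma>) ` (\<lambda>\<gamma>. \<sigma> ` \<gamma>) ` \<Gamma>0" by (simp add: image_image)
  also have "\<dots> = blowup \<Gamma>0" using assms(1) \<sigma>(1) unfolding blowup_def by simp
  finally show ?thesis .
qed

lemma finite_bij_betw_point:
  assumes "finite A" "finite B" "card A = card B" "p \<in> A" "p' \<in> B"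
  shows "\<exists>f. bij_betw f A B \<and> f p = p'"
proof -
  obtain h where h: "bij_betw h A B" using finite_same_card_bij assms(1-3) by blast
  then have "h p \<in> B" using assms(4) bij_betwE by blast
  then have "bij_betw (Transposition.transpose (h p) p' \<circ> h) A B"
    using h assms(5) by (intro bij_betw_trans[OF h] bij_betw_transpose_iff) simp
  then show ?thesis by (intro exI[of _ "Transposition.transpose (h p) p' \<circ> h"]) simp
qed

locale uniform_partition =
  fixes V :: "'a set" and U :: "'a set set" and a :: nat
  assumes finite_points: "finite V" and partition: "partition_on V U"
    and card_block: "u \<in> U \<Longrightarrow> card u = a"
begin

lemma finite_blocks: "finite U"
  using finite_elements[OF finite_points partition] .

lemma Union_blocks: "\<Union>U = V"
  using partition_onD1[OF partition] by simp

lemma block_subset: "u \<in> U \<Longrightarrow> u \<subseteq> V"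
  using Union_blocks by auto

lemma finite_block: "u \<in> U \<Longrightarrow> finite u"
  using block_subset finite_points by (rule finite_subset)

lemma block_nonempty: "u \<in> U \<Longrightarrow> u \<noteq> {}"
  using partition_onD3[OF partition] by auto

lemma blocks_disjoint: "u \<in> U \<Longrightarrow> w \<in> U \<Longrightarrow> u \<noteq> w \<Longrightarrow> u \<inter> w = {}"
  using partition_onD2[OF partition] by (auto simp: disjoint_def)

lemma block_Int_Union_blocks:
  assumes "\<gamma> \<subseteq> U" "u \<in> U"
  shows "u \<inter> \<Union>\<gamma> = (if u \<in> \<gamma> then u else {})"
  using assms blocks_disjoint by auto

lemma Union_blocks_inject:
  assumes "\<gamma> \<subseteq> U" "\<gamma>' \<subseteq> U" "\<Union>\<gamma> = \<Union>\<gamma>'"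
  shows "\<gamma> = \<gamma>'"
proof -
  have "u \<in> \<gamma> \<longleftrightarrow> u \<in> \<gamma>'" if "u \<in> U" for u
    using block_Int_Union_blocks[OF assms(1) that] block_Int_Union_blocks[OF assms(2) that]
      block_nonempty[OF that] assms(3) by (metis (full_types))
  then show ?thesis using assms(1,2) by blast
qed

lemma Union_blocks_Diff: "\<gamma> \<subseteq> U \<Longrightarrow> \<gamma>' \<subseteq> U \<Longrightarrow> \<Union>\<gamma> - \<Union>\<gamma>' = \<Union>(\<gamma> - \<gamma>')"
  using blocks_disjoint by blast

lemma card_Union_blocks:
  assumes "\<gamma> \<subseteq> U"
  shows "card (\<Union>\<gamma>) = a * card \<gamma>"
proof -
  have "pairwise disjnt \<gamma>"
    using assms blocks_disjoint unfolding pairwise_def disjnt_def by blast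
  then have "card (\<Union>\<gamma>) = (\<Sum>u\<in>\<gamma>. card u)"
    using assms finite_block by (intro card_Union_disjoint) auto
  also have "\<dots> = a * card \<gamma>" using assms card_block by (simp add: subset_iff)
  finally show ?thesis .
qed

lemma block_bij_some:
  assumes "u \<in> U" "w \<in> U"
  shows "bij_betw (SOME f. bij_betw f u w) u w"
  using assms finite_block card_block
  by (intro someI_ex[of "\<lambda>f. bij_betw f u w"] finite_same_card_bij) simp_all

lemma permutes_lift:
  assumes \<sigma>: "\<sigma> permutes U" and F: "\<And>u. u \<in> U \<Longrightarrow> bij_betw (F u) u (\<sigma> u)"
  shows "\<exists>g. g permutes V \<and> (\<forall>u\<in>U. g ` u = \<sigma> u) \<and> (\<forall>u\<in>U. \<forall>x\<in>u. g x = F u x)"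
proof -
  define block where "block x = (THE u. u \<in> U \<and> x \<in> u)" for x
  have block: "block x = u" if "u \<in> U" "x \<in> u" for u x
    unfolding block_def using that blocks_disjoint by (intro the_equality) auto
  define g where "g x = (if x \<in> V then F (block x) x else x)" for x
  have gF: "\<forall>u\<in>U. \<forall>x\<in>u. g x = F u x"
    unfolding g_def using block block_subset by auto
  have bij: "bij_betw g u (\<sigma> u)" if "u \<in> U" for u
  proof -
    have "bij_betw g u (\<sigma> u) \<longleftrightarrow> bij_betw (F u) u (\<sigma> u)"
      using gF that by (intro bij_betw_cong) simp
    then show ?thesis using F[OF that] by simp
  qed
  have "disjoint_family_on \<sigma> U"
    unfolding disjoint_family_on_def
  proof (intro ballI impI)
    fix u w assume "u \<in> U" "w \<in> U" "u \<noteq> w"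
    then have "\<sigma> u \<noteq> \<sigma> w" using permutes_inj[OF \<sigma>] by (simp add: inj_eq)
    then show "\<sigma> u \<inter> \<sigma> w = {}"
      using \<open>u \<in> U\<close> \<open>w \<in> U\<close> permutes_in_image[OF \<sigma>] blocks_disjoint by simp
  qed
  then have "bij_betw g (\<Union>u\<in>U. u) (\<Union>(\<sigma> ` U))"
    using bij by (rule bij_betw_UNION_disjoint)
  then have "bij_betw g V V"
    using Union_blocks permutes_image[OF \<sigma>] by simp
  then have "g permutes V" by (rule bij_imp_permutes) (simp add: g_def)
  moreover have "\<forall>u\<in>U. g ` u = \<sigma> u" using bij bij_betw_imp_surj_on by blast
  ultimately show ?thesis using gF by blast
qed

lemma permutes_lift_exists:
  assumes "\<sigma> permutes U"
  shows "\<exists>g. g permutes V \<and> (\<forall>u\<in>U. g ` u = \<sigma> u)"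
proof -
  have "bij_betw (SOME f. bij_betw f u (\<sigma> u)) u (\<sigma> u)" if "u \<in> U" for u
    using block_bij_some that permutes_in_image[OF assms] by simp
  from permutes_lift[OF assms this] show ?thesis by blast
qed

lemma permutes_lift_points:
  assumes \<sigma>: "\<sigma> permutes U" and "u1 \<in> U" "u2 \<in> U" "u1 \<noteq> u2"
    and "p1 \<in> u1" "p2 \<in> u2" "p1' \<in> \<sigma> u1" "p2' \<in> \<sigma> u2"
  shows "\<exists>g. g permutes V \<and> (\<forall>u\<in>U. g ` u = \<sigma> u) \<and> g p1 = p1' \<and> g p2 = p2'"
proof -
  have block_bij: "\<exists>f. bij_betw f u (\<sigma> u) \<and> f p = p'" if "u \<in> U" "p \<in> u" "p' \<in> \<sigma> u" for u p p'
    using that permutes_in_image[OF \<sigma>] finite_block card_block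
    by (intro finite_bij_betw_point) simp_all
  obtain f1 where f1: "bij_betw f1 u1 (\<sigma> u1)" "f1 p1 = p1'" using block_bij assms by blast
  obtain f2 where f2: "bij_betw f2 u2 (\<sigma> u2)" "f2 p2 = p2'" using block_bij assms by blast
  define F where
    "F u = (if u = u1 then f1 else if u = u2 then f2 else SOME f. bij_betw f u (\<sigma> u))" for u
  have "bij_betw (F u) u (\<sigma> u)" if "u \<in> U" for u
    unfolding F_def using f1(1) f2(1) block_bij_some[OF that] that permutes_in_image[OF \<sigma>] by simp
  then obtain g where g: "g permutes V" "\<forall>u\<in>U. g ` u = \<sigma> u" "\<forall>u\<in>U. \<forall>x\<in>u. g x = F u x"
    using permutes_lift[OF \<sigma>] by blast
  have "g p1 = p1'" using g(3) assms(2,5) f1(2) by (simp add: F_def)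
  moreover have "g p2 = p2'" using g(3) assms(3,4,6) f2(2) by (simp add: F_def)
  ultimately show ?thesis using g(1,2) by blast
qed

definition swap_profile :: "'a set set \<Rightarrow> 'a set \<Rightarrow> 'a set \<Rightarrow> 'a set \<Rightarrow> nat" where
  "swap_profile \<gamma> x y u = (if u = x then a - 1 else if u = y then 1 else if u \<in> \<gamma> then a else 0)"

lemma card_block_Int_swap:
  assumes "\<gamma> \<subseteq> U" "x \<in> \<gamma>" "y \<in> U - \<gamma>" "p \<in> x" "q \<in> y" "u \<in> U"
  shows "card (u \<inter> insert q (\<Union>\<gamma> - {p})) = swap_profile \<gamma> x y u"
proof -
  have "x \<in> U" using assms(1,2) by blast
  have p: "p \<in> u \<longleftrightarrow> u = x" using blocks_disjoint[OF assms(6) \<open>x \<in> U\<close>] assms(4) by blast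
  have q: "q \<in> u \<longleftrightarrow> u = y" using blocks_disjoint[OF assms(6)] assms(3,5) by blast
  have "u \<inter> insert q (\<Union>\<gamma> - {p}) = (if q \<in> u then {q} else {}) \<union> (u \<inter> \<Union>\<gamma> - {p})" by auto
  also have "\<dots> = (if u = x then x - {p} else if u = y then {q} else if u \<in> \<gamma> then u else {})"
    using block_Int_Union_blocks[OF assms(1,6)] p q assms(2,3) by auto
  finally show ?thesis
    using card_block finite_block assms(3,4,6) \<open>x \<in> U\<close> by (simp add: swap_profile_def)
qed

lemma swap_profile_image:
  assumes "\<sigma> permutes U" "\<forall>u\<in>U. g ` u = \<sigma> u" "inj g"
    and "\<gamma> \<subseteq> U" "x \<in> \<gamma>" "y \<in> U - \<gamma>" "p \<in> x" "q \<in> y"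
    and "x' \<in> \<gamma>" "y' \<in> U - \<gamma>" "p' \<in> x'" "q' \<in> y'"
    and "g ` insert q (\<Union>\<gamma> - {p}) = insert q' (\<Union>\<gamma> - {p'})" "u \<in> U"
  shows "swap_profile \<gamma> x' y' (\<sigma> u) = swap_profile \<gamma> x y u"
proof -
  have "\<sigma> u \<inter> insert q' (\<Union>\<gamma> - {p'}) = g ` (u \<inter> insert q (\<Union>\<gamma> - {p}))"
    using assms(2,3,13,14) by (simp add: image_Int)
  then have "card (\<sigma> u \<inter> insert q' (\<Union>\<gamma> - {p'})) = card (u \<inter> insert q (\<Union>\<gamma> - {p}))"
    using assms(3) by (simp add: card_image inj_on_subset)
  moreover have "\<sigma> u \<in> U" using assms(1,14) by (simp add: permutes_in_image)
  ultimately show ?thesis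
    using card_block_Int_swap[OF assms(4-8,14)] card_block_Int_swap[OF assms(4,9-12)] by simp
qed

lemma swap_profile_preserving_permutation:
  assumes "1 < a" "\<sigma> permutes U" "\<gamma> \<subseteq> U" "x \<in> \<gamma>" "y \<in> U - \<gamma>" "x' \<in> \<gamma>" "y' \<in> U - \<gamma>"
    and profile: "\<And>u. u \<in> U \<Longrightarrow> swap_profile \<gamma> x' y' (\<sigma> u) = swap_profile \<gamma> x y u"
  shows "\<sigma> ` \<gamma> = \<gamma> \<and> \<sigma> x = x' \<and> \<sigma> y = y' \<or> a = 2 \<and> \<sigma> ` \<gamma> = insert y' (\<gamma> - {x'})"
proof -
  have "inj \<sigma>" using assms(2) by (rule permutes_inj)
  have "finite \<gamma>" using assms(3) finite_blocks by (rule finite_subset)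
  have "x \<in> U" "y \<in> U" "x \<noteq> y" using assms(3-5) by blast+
  have "\<sigma> ` (\<gamma> - {x}) = \<gamma> - {x'}"
  proof (rule card_subset_eq)
    show "\<sigma> ` (\<gamma> - {x}) \<subseteq> \<gamma> - {x'}"
    proof
      fix w assume "w \<in> \<sigma> ` (\<gamma> - {x})"
      then obtain u where "u \<in> \<gamma>" "u \<noteq> x" "w = \<sigma> u" by blast
      moreover have "u \<noteq> y" "u \<in> U" using \<open>u \<in> \<gamma>\<close> assms(3,5) by blast+
      ultimately have "swap_profile \<gamma> x' y' w = a" using profile[of u] by (simp add: swap_profile_def)
      then show "w \<in> \<gamma> - {x'}" using assms(1) unfolding swap_profile_def by (auto split: if_splits)
    qed
    show "card (\<sigma> ` (\<gamma> - {x})) = card (\<gamma> - {x'})"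
      using \<open>inj \<sigma>\<close> \<open>finite \<gamma>\<close> assms(4,6) by (simp add: card_image inj_on_subset)
  qed (use \<open>finite \<gamma>\<close> in simp)
  then have image: "\<sigma> ` \<gamma> = insert (\<sigma> x) (\<gamma> - {x'})"
    using assms(4) by (metis image_insert insert_Diff)
  have "swap_profile \<gamma> x' y' (\<sigma> x) = a - 1"
    using profile[OF \<open>x \<in> U\<close>] by (simp add: swap_profile_def)
  then have x_image: "\<sigma> x = x' \<or> a = 2 \<and> \<sigma> x = y'"
    using assms(1) unfolding swap_profile_def by (auto split: if_splits)
  have "swap_profile \<gamma> x' y' (\<sigma> y) = 1"
    using profile[OF \<open>y \<in> U\<close>] \<open>x \<noteq> y\<close> by (simp add: swap_profile_def)
  moreover have "swap_profile \<gamma> x' y' (\<sigma> y) \<in> {a, 0}" if "\<sigma> y \<noteq> x'" "\<sigma> y \<noteq> y'"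
    using that unfolding swap_profile_def by simp
  ultimately have y_image: "\<sigma> y = x' \<or> \<sigma> y = y'" using assms(1) by auto
  have "\<sigma> x \<noteq> \<sigma> y" using \<open>inj \<sigma>\<close> \<open>x \<noteq> y\<close> by (simp add: inj_eq)
  from x_image show ?thesis
  proof
    assume "\<sigma> x = x'"
    then have "\<sigma> ` \<gamma> = \<gamma>" using image assms(6) by (simp add: insert_absorb)
    moreover have "\<sigma> y = y'" using y_image \<open>\<sigma> x \<noteq> \<sigma> y\<close> \<open>\<sigma> x = x'\<close> by simp
    ultimately show ?thesis using \<open>\<sigma> x = x'\<close> by simp
  next
    assume "a = 2 \<and> \<sigma> x = y'"
    then show ?thesis using image by simp
  qed
qed

end

section \<open>Blowing up a code\<close>

locale blowup_code = uniform_partition +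
  fixes k0 :: nat and \<Gamma>0 :: "'a set set set"
  assumes code: "\<Gamma>0 \<subseteq> johnson_verts U k0"
begin

lemma code_subset_blocks: "\<gamma> \<in> \<Gamma>0 \<Longrightarrow> \<gamma> \<subseteq> U"
  using code by (auto simp: johnson_verts_def)

lemma blowup_subset_johnson_verts: "blowup \<Gamma>0 \<subseteq> johnson_verts V (a * k0)"
proof
  fix S assume "S \<in> blowup \<Gamma>0"
  then obtain \<gamma> where "\<gamma> \<in> \<Gamma>0" "S = \<Union>\<gamma>" unfolding blowup_def by blast
  moreover have "\<gamma> \<subseteq> U" "card \<gamma> = k0"
    using code \<open>\<gamma> \<in> \<Gamma>0\<close> by (auto simp: johnson_verts_def)
  moreover have "\<Union>\<gamma> \<subseteq> V" using \<open>\<gamma> \<subseteq> U\<close> Union_blocks by blast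
  ultimately show "S \<in> johnson_verts V (a * k0)"
    using card_Union_blocks by (simp add: johnson_verts_def)
qed

lemma min_dist_blowup:
  assumes "0 < a"
  shows "min_dist V (a * k0) (blowup \<Gamma>0) = enat a * min_dist U k0 \<Gamma>0"
proof -
  let ?P = "{(\<gamma>, \<gamma>') \<in> \<Gamma>0 \<times> \<Gamma>0. \<gamma> \<noteq> \<gamma>'}"
  have pairs: "{(A, B) \<in> blowup \<Gamma>0 \<times> blowup \<Gamma>0. A \<noteq> B} = (\<lambda>(\<gamma>, \<gamma>'). (\<Union>\<gamma>, \<Union>\<gamma>')) ` ?P"
    using Union_blocks_inject code_subset_blocks unfolding blowup_def by auto
  have diff: "card (\<Union>\<gamma> - \<Union>\<gamma>') = a * card (\<gamma> - \<gamma>')" if "\<gamma> \<in> \<Gamma>0" "\<gamma>' \<in> \<Gamma>0" for \<gamma> \<gamma>'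
  proof -
    have "\<gamma> \<subseteq> U" "\<gamma>' \<subseteq> U" using that code_subset_blocks by simp_all
    then show ?thesis using card_Union_blocks[of "\<gamma> - \<gamma>'"] by (auto simp: Union_blocks_Diff)
  qed
  have "min_dist V (a * k0) (blowup \<Gamma>0) = (INF (\<gamma>, \<gamma>')\<in>?P. enat (card (\<Union>\<gamma> - \<Union>\<gamma>')))"
    unfolding min_dist_johnson[OF finite_points blowup_subset_johnson_verts] pairs image_image
    by (simp add: case_prod_beta)
  also have "\<dots> = (INF (\<gamma>, \<gamma>')\<in>?P. enat a * enat (card (\<gamma> - \<gamma>')))"
    using diff by (intro INF_cong) auto
  also have "\<dots> = enat a * min_dist U k0 \<Gamma>0"
    unfolding min_dist_johnson[OF finite_blocks code]
    using INF_mult_left_enat[OF assms, of "\<lambda>(\<gamma>, \<gamma>'). enat (card (\<gamma> - \<gamma>'))" ?P]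
    by (simp add: case_prod_beta)
  finally show ?thesis .
qed

lemma aut_sym_permutes: "\<forall>\<sigma>\<in>aut_sym U k0 \<Gamma>0. \<sigma> permutes U"
  by (simp add: aut_sym_eq)

lemma wreath_aut_sym_johnson_aut:
  assumes "g \<in> wreath V U (aut_sym U k0 \<Gamma>0)"
  shows "(\<lambda>S. g ` S) \<in> johnson_aut V (a * k0) (blowup \<Gamma>0)"
proof -
  have "g permutes V" using assms by (simp add: mem_wreath_iff[OF aut_sym_permutes])
  moreover have "(\<lambda>S. g ` S) ` blowup \<Gamma>0 = blowup \<Gamma>0"
    using code_subset_blocks by (intro wreath_image_blowup[OF _ _ assms]) (auto simp: aut_sym_eq)
  ultimately show ?thesis by (simp add: permutes_johnson_aut_iff)
qed

lemma set_transitive_blowup_iff: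
  assumes A: "\<forall>\<sigma>\<in>A. \<sigma> permutes U"
  shows "set_transitive (wreath V U A) (blowup \<Gamma>0) \<longleftrightarrow> set_transitive A \<Gamma>0"
proof
  assume trans: "set_transitive (wreath V U A) (blowup \<Gamma>0)"
  show "set_transitive A \<Gamma>0" unfolding set_transitive_def
  proof (intro ballI)
    fix \<gamma> \<gamma>' assume \<gamma>: "\<gamma> \<in> \<Gamma>0" "\<gamma>' \<in> \<Gamma>0"
    then have "\<Union>\<gamma> \<in> blowup \<Gamma>0" "\<Union>\<gamma>' \<in> blowup \<Gamma>0" unfolding blowup_def by simp_all
    then obtain g where g: "g \<in> wreath V U A" "g ` \<Union>\<gamma> = \<Union>\<gamma>'"
      using set_transitiveD[OF trans] by blast
    then obtain \<sigma> where \<sigma>: "\<sigma> \<in> A" "\<forall>u\<in>U. g ` u = \<sigma> u"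
      by (auto simp: mem_wreath_iff[OF A])
    have "\<gamma> \<subseteq> U" "\<gamma>' \<subseteq> U" using code_subset_blocks \<gamma> by simp_all
    moreover have "\<sigma> permutes U" using A \<sigma>(1) by simp
    ultimately have "\<sigma> ` \<gamma> \<subseteq> U" by (auto simp: permutes_in_image)
    moreover have "\<Union>(\<sigma> ` \<gamma>) = \<Union>\<gamma>'"
      using image_Union_blocks[OF \<sigma>(2) \<open>\<gamma> \<subseteq> U\<close>] g(2) by simp
    ultimately have "\<sigma> ` \<gamma> = \<gamma>'" using Union_blocks_inject \<open>\<gamma>' \<subseteq> U\<close> by simp
    then show "\<exists>\<sigma>\<in>A. \<sigma> ` \<gamma> = \<gamma>'" using \<sigma>(1) by blast
  qed
next
  assume trans: "set_transitive A \<Gamma>0"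
  show "set_transitive (wreath V U A) (blowup \<Gamma>0)" unfolding set_transitive_def
  proof (intro ballI)
    fix S S' assume "S \<in> blowup \<Gamma>0" "S' \<in> blowup \<Gamma>0"
    then obtain \<gamma> \<gamma>' where \<gamma>: "\<gamma> \<in> \<Gamma>0" "S = \<Union>\<gamma>" "\<gamma>' \<in> \<Gamma>0" "S' = \<Union>\<gamma>'"
      unfolding blowup_def by blast
    then obtain \<sigma> where \<sigma>: "\<sigma> \<in> A" "\<sigma> ` \<gamma> = \<gamma>'"
      using set_transitiveD[OF trans] by blast
    have "\<sigma> permutes U" using A \<sigma>(1) by simp
    then obtain g where g: "g permutes V" "\<forall>u\<in>U. g ` u = \<sigma> u"
      using permutes_lift_exists by blast
    then have "g \<in> wreath V U A" using \<sigma>(1) by (auto simp: mem_wreath_iff[OF A])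
    moreover have "g ` S = S'"
      using image_Union_blocks[OF g(2) code_subset_blocks[OF \<gamma>(1)]] \<gamma>(2,4) \<sigma>(2) by simp
    ultimately show "\<exists>g\<in>wreath V U A. g ` S = S'" by blast
  qed
qed

lemma strongly_incidence_transitive_blowup:
  assumes A: "\<forall>\<sigma>\<in>A. \<sigma> permutes U" and sit: "strongly_incidence_transitive A U \<Gamma>0"
  shows "strongly_incidence_transitive (wreath V U A) V (blowup \<Gamma>0)"
  unfolding strongly_incidence_transitive_def
proof (intro conjI ballI)
  fix g assume "g \<in> wreath V U A"
  moreover have "\<forall>\<sigma>\<in>A. \<sigma> permutes U \<and> (\<lambda>S. \<sigma> ` S) ` \<Gamma>0 = \<Gamma>0"
    using A sit unfolding strongly_incidence_transitive_def by simp
  ultimately show "(\<lambda>S. g ` S) ` blowup \<Gamma>0 = blowup \<Gamma>0"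
    using code_subset_blocks by (intro wreath_image_blowup) auto
next
  show "set_transitive (wreath V U A) (blowup \<Gamma>0)"
    using strongly_incidence_transitive_set_transitive[OF sit] set_transitive_blowup_iff[OF A]
    by simp
next
  fix S x y x' y'
  assume "S \<in> blowup \<Gamma>0" and x: "x \<in> S" "x' \<in> S" and y: "y \<in> V - S" "y' \<in> V - S"
  then obtain \<gamma> where \<gamma>: "\<gamma> \<in> \<Gamma>0" "S = \<Union>\<gamma>" unfolding blowup_def by blast
  have "\<gamma> \<subseteq> U" using code_subset_blocks[OF \<gamma>(1)] .
  obtain ux ux' where ux: "ux \<in> \<gamma>" "x \<in> ux" "ux' \<in> \<gamma>" "x' \<in> ux'"
    using x unfolding \<gamma>(2) by blast
  obtain uy uy' where uy: "uy \<in> U" "y \<in> uy" "uy' \<in> U" "y' \<in> uy'"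
    using y unfolding Union_blocks[symmetric] by blast
  then have uy_out: "uy \<in> U - \<gamma>" "uy' \<in> U - \<gamma>" using y unfolding \<gamma>(2) by blast+
  obtain \<sigma> where \<sigma>: "\<sigma> \<in> A" "\<sigma> ` \<gamma> = \<gamma>" "\<sigma> ux = ux'" "\<sigma> uy = uy'"
    using strongly_incidence_transitive_stabiliser[OF sit \<gamma>(1) ux(1) uy_out(1) ux(3) uy_out(2)]
    by blast
  have "\<sigma> permutes U" using A \<sigma>(1) by simp
  moreover have "ux \<in> U" "ux \<noteq> uy" using ux(1) uy_out(1) \<open>\<gamma> \<subseteq> U\<close> by blast+
  ultimately obtain g where g: "g permutes V" "\<forall>u\<in>U. g ` u = \<sigma> u" "g x = x'" "g y = y'"
    using permutes_lift_points[of \<sigma> ux uy x y x' y'] uy(1) ux(2,4) uy(2,4) \<sigma>(3,4) by blast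
  have "g \<in> wreath V U A" using g(1,2) \<sigma>(1) by (auto simp: mem_wreath_iff[OF A])
  moreover have "g ` S = S" using image_Union_blocks[OF g(2) \<open>\<gamma> \<subseteq> U\<close>] \<gamma>(2) \<sigma>(2) by simp
  ultimately show "\<exists>g\<in>wreath V U A. g ` S = S \<and> g x = x' \<and> g y = y'" using g(3,4) by blast
qed

lemma swap_in_nbr_set:
  assumes "1 < a" "\<gamma> \<in> \<Gamma>0" "x \<in> \<gamma>" "y \<in> U - \<gamma>" "p \<in> x" "q \<in> y"
  shows "insert q (\<Union>\<gamma> - {p}) \<in> nbr_set V (a * k0) (blowup \<Gamma>0)"
proof -
  let ?N = "insert q (\<Union>\<gamma> - {p})"
  have "\<gamma> \<subseteq> U" using code_subset_blocks[OF assms(2)] .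
  have "\<Union>\<gamma> \<in> blowup \<Gamma>0" using assms(2) unfolding blowup_def by simp
  moreover have "p \<in> \<Union>\<gamma>" using assms(3,5) by blast
  moreover have "q \<in> V - \<Union>\<gamma>"
    using assms(4,6) block_Int_Union_blocks[OF \<open>\<gamma> \<subseteq> U\<close>, of y] block_subset[of y] by auto
  ultimately have adj: "johnson_adj V (a * k0) (\<Union>\<gamma>) ?N"
    using blowup_subset_johnson_verts by (intro johnson_adj_swap[OF finite_points]) auto
  have "?N \<notin> blowup \<Gamma>0"
  proof
    assume "?N \<in> blowup \<Gamma>0"
    then obtain \<gamma>' where "\<gamma>' \<in> \<Gamma>0" "?N = \<Union>\<gamma>'" unfolding blowup_def by blast
    have "x \<in> U" using \<open>\<gamma> \<subseteq> U\<close> assms(3) by blast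
    then have "card (x \<inter> ?N) \<in> {0, a}"
      using block_Int_Union_blocks[OF code_subset_blocks[OF \<open>\<gamma>' \<in> \<Gamma>0\<close>]] card_block
      unfolding \<open>?N = \<Union>\<gamma>'\<close> by simp
    moreover have "card (x \<inter> ?N) = a - 1"
      using card_block_Int_swap[OF \<open>\<gamma> \<subseteq> U\<close> assms(3-6) \<open>x \<in> U\<close>] by (simp add: swap_profile_def)
    ultimately show False using assms(1) by auto
  qed
  moreover have "?N \<in> johnson_verts V (a * k0)" using adj by (simp add: johnson_adj_def)
  ultimately show ?thesis
    using adj \<open>\<Union>\<gamma> \<in> blowup \<Gamma>0\<close> unfolding nbr_set_def by blast
qed

lemma neighbour_transitive_blowup:
  assumes "1 < a"
    and nt: "neighbour_transitive (wreath V U (aut_sym U k0 \<Gamma>0)) V (a * k0) (blowup \<Gamma>0)"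
  shows "strongly_incidence_transitive (aut_sym U k0 \<Gamma>0) U \<Gamma>0 \<or> a = 2 \<and> min_dist U k0 \<Gamma>0 = 1"
proof (rule disjCI)
  let ?A = "aut_sym U k0 \<Gamma>0" and ?W = "wreath V U (aut_sym U k0 \<Gamma>0)"
  assume not_exceptional: "\<not> (a = 2 \<and> min_dist U k0 \<Gamma>0 = 1)"
  show "strongly_incidence_transitive ?A U \<Gamma>0"
    unfolding strongly_incidence_transitive_def
  proof (intro conjI ballI)
    show "(\<lambda>S. \<sigma> ` S) ` \<Gamma>0 = \<Gamma>0" if "\<sigma> \<in> ?A" for \<sigma>
      using that by (simp add: aut_sym_eq)
    show "set_transitive ?A \<Gamma>0"
      using nt set_transitive_blowup_iff[OF aut_sym_permutes]
      unfolding neighbour_transitive_def by simp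
  next
    fix \<gamma> x y x' y'
    assume \<gamma>: "\<gamma> \<in> \<Gamma>0" and x: "x \<in> \<gamma>" "x' \<in> \<gamma>" and y: "y \<in> U - \<gamma>" "y' \<in> U - \<gamma>"
    have "\<gamma> \<subseteq> U" using code_subset_blocks[OF \<gamma>] .
    then have "x \<noteq> {}" "y \<noteq> {}" "x' \<noteq> {}" "y' \<noteq> {}"
      using x y block_nonempty by blast+
    then obtain p q p' q' where pq: "p \<in> x" "q \<in> y" "p' \<in> x'" "q' \<in> y'"
      by (meson ex_in_conv)
    let ?N = "insert q (\<Union>\<gamma> - {p})" and ?N' = "insert q' (\<Union>\<gamma> - {p'})"
    have "set_transitive ?W (nbr_set V (a * k0) (blowup \<Gamma>0))"
      using nt unfolding neighbour_transitive_def by simp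
    moreover have "?N \<in> nbr_set V (a * k0) (blowup \<Gamma>0)" "?N' \<in> nbr_set V (a * k0) (blowup \<Gamma>0)"
      using swap_in_nbr_set[OF assms(1) \<gamma>] x y pq by simp_all
    ultimately have "\<exists>g\<in>?W. g ` ?N = ?N'" by (rule set_transitiveD)
    then obtain g where "g \<in> ?W" "g ` ?N = ?N'" ..
    then obtain \<sigma> where g: "g permutes V" and \<sigma>: "\<sigma> \<in> ?A" "\<forall>u\<in>U. g ` u = \<sigma> u"
      by (auto simp: mem_wreath_iff[OF aut_sym_permutes])
    have "\<sigma> permutes U" using \<sigma>(1) by (simp add: aut_sym_eq)
    from swap_profile_preserving_permutation[OF assms(1) this \<open>\<gamma> \<subseteq> U\<close> x(1) y(1) x(2) y(2)
        swap_profile_image[OF this \<sigma>(2) permutes_inj[OF g] \<open>\<gamma> \<subseteq> U\<close>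
          x(1) y(1) pq(1,2) x(2) y(2) pq(3,4) \<open>g ` ?N = ?N'\<close>]]
    consider "\<sigma> ` \<gamma> = \<gamma>" "\<sigma> x = x'" "\<sigma> y = y'" | "a = 2" "\<sigma> ` \<gamma> = insert y' (\<gamma> - {x'})"
      by blast
    then show "\<exists>\<sigma>\<in>?A. \<sigma> ` \<gamma> = \<gamma> \<and> \<sigma> x = x' \<and> \<sigma> y = y'"
    proof cases
      case 1
      then show ?thesis using \<sigma>(1) by blast
    next
      case 2
      have "\<sigma> ` \<gamma> \<in> \<Gamma>0" using \<sigma>(1) \<gamma> by (auto simp: aut_sym_eq)
      moreover have "johnson_adj U k0 \<gamma> (\<sigma> ` \<gamma>)"
        unfolding 2(2) using code \<gamma> x(2) y(2) by (intro johnson_adj_swap[OF finite_blocks]) auto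
      ultimately have "min_dist U k0 \<Gamma>0 = 1"
        using \<gamma> min_dist_eq_1_iff[OF finite_blocks code] by blast
      with 2(1) not_exceptional show ?thesis by simp
    qed
  qed
qed

end

theorem lemma4p6:
  fixes V :: "'a set" and U :: "'a set set" and \<Gamma>0 :: "'a set set set"
    and a b k0 :: nat
  assumes "finite V"
    and "partition_on V U"
    and "card U = b"
    and "\<forall>u\<in>U. card u = a"
    and "a > 1" and "b \<ge> 4"
    and "1 \<le> k0" and "k0 \<le> b - 1"
    and "\<Gamma>0 \<subseteq> johnson_verts U k0"
  shows "(\<forall>g\<in>wreath V U (aut_sym U k0 \<Gamma>0).
            (\<lambda>S. g ` S) \<in> johnson_aut V (a * k0) (blowup \<Gamma>0))
    \<and> min_dist V (a * k0) (blowup \<Gamma>0) = enat a * min_dist U k0 \<Gamma>0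
    \<and> (strongly_incidence_transitive (aut_sym U k0 \<Gamma>0) U \<Gamma>0 \<longrightarrow>
         strongly_incidence_transitive (wreath V U (aut_sym U k0 \<Gamma>0)) V (blowup \<Gamma>0)
         \<and> (\<Gamma>0 = johnson_verts U k0 \<or> min_dist U k0 \<Gamma>0 \<ge> 2))
    \<and> (neighbour_transitive (wreath V U (aut_sym U k0 \<Gamma>0)) V (a * k0) (blowup \<Gamma>0) \<longrightarrow>
         strongly_incidence_transitive (aut_sym U k0 \<Gamma>0) U \<Gamma>0
         \<or> (a = 2 \<and> min_dist U k0 \<Gamma>0 = 1))"
proof -
  interpret blowup_code V U a k0 \<Gamma>0
    using assms by unfold_locales auto
  show ?thesis
  proof (intro conjI impI ballI)
    fix g assume "g \<in> wreath V U (aut_sym U k0 \<Gamma>0)"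
    then show "(\<lambda>S. g ` S) \<in> johnson_aut V (a * k0) (blowup \<Gamma>0)"
      by (rule wreath_aut_sym_johnson_aut)
  next
    show "min_dist V (a * k0) (blowup \<Gamma>0) = enat a * min_dist U k0 \<Gamma>0"
      using \<open>a > 1\<close> by (intro min_dist_blowup) simp
  next
    assume sit: "strongly_incidence_transitive (aut_sym U k0 \<Gamma>0) U \<Gamma>0"
    then show "strongly_incidence_transitive (wreath V U (aut_sym U k0 \<Gamma>0)) V (blowup \<Gamma>0)"
      by (rule strongly_incidence_transitive_blowup[OF aut_sym_permutes])
    show "\<Gamma>0 = johnson_verts U k0 \<or> min_dist U k0 \<Gamma>0 \<ge> 2"
      by (rule strongly_incidence_transitive_min_dist[OF finite_blocks code aut_sym_permutes sit])
  next
    assume "neighbour_transitive (wreath V U (aut_sym U k0 \<Gamma>0)) V (a * k0) (blowup \<Gamma>0)"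
    then show "strongly_incidence_transitive (aut_sym U k0 \<Gamma>0) U \<Gamma>0 \<or> a = 2 \<and> min_dist U k0 \<Gamma>0 = 1"
      by (rule neighbour_transitive_blowup[OF \<open>a > 1\<close>])
  qed
qed

end
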